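(* Let $1\le k\le n$ and $\lambda_0,\dots,\lambda_n\in\mathbb R$. The set of real solutions $(a_0,\dots,a_n)$ of the linear system $$\sum_{i=0}^n a_{i}\frac{\binom{k}{s}\binom{n-k}{i-s}}{\binom{n}{i}}=\sum_{i=0}^n\lambda_i\frac{\binom{k}{s}\binom{n-k}{i-s}}{\binom{n}{i}},\qquad 0\le s\le k,$$ is exactly the set of vectors of the form $$a_r=\sum_{i=k+1}^n(-1)^{k-r+1}\binom{i}{k}\binom{k}{r}\frac{i-k}{i-r}\,s_i+\lambda_r\quad(0\le r\le k),\qquad a_r=s_r+\lambda_r\quad(k+1\le r\le n),$$ with $s_{k+1},\dots,s_n\in\mathbb R$ arbitrary.
   Context: Convention: $\binom{m}{i}=0$ if $i<0$ or $i>m$. *)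

theory Defs
  imports Complex_Main
begin

definition binom_int :: "nat \<Rightarrow> int \<Rightarrow> nat" where
  "binom_int m i = (if i < 0 then 0 else m choose (nat i))"

end

theory Submission
  imports Defs "HOL-Computational_Algebra.Polynomial"
begin

text \<open>Multiplying the s-th equation by C(n,k) turns its coefficient of a_r into
  C(r,s) C(n-r,k-s), so with d = a - lam the system reads
  sum_r d_r C(r,s) C(n-r,k-s) = 0 for s <= k. As a function of r each coefficient is a
  polynomial of degree at most k, so Lagrange interpolation at the nodes 0, ..., k writes the
  column of every x > k as the combination of the columns 0, ..., k with weights
  L_r(x) = (-1)^(k-r) C(x,k) C(k,r) (x-k)/(x-r). Hence d_r = - sum_{x>k} L_r(x) d_x is a
  solution for any free choice of the d_x with x > k; and these are all the solutions, since
  the columns 0, ..., k form a triangular matrix (C(r,s) = 0 for r < s) with nonzero diagonal.\<close>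

lemma lagrange_interpolation:
  fixes p :: "'a::field poly"
  assumes "finite A" and "degree p < card A"
  shows "poly p x = (\<Sum>a\<in>A. poly p a * (\<Prod>b\<in>A-{a}. (x - b) / (a - b)))"
proof -
  define q where "q = (\<Sum>a\<in>A. smult (poly p a / (\<Prod>b\<in>A-{a}. a - b)) (\<Prod>b\<in>A-{a}. [:-b, 1:]))"
  have poly_q: "poly q y = (\<Sum>a\<in>A. poly p a * (\<Prod>b\<in>A-{a}. (y - b) / (a - b)))" for y
    by (simp add: q_def poly_sum poly_prod prod_dividef)
  have deg_q: "degree q \<le> card A - 1"
    unfolding q_def
  proof (intro degree_sum_le order.trans[OF degree_smult_le])
    fix a assume "a \<in> A"
    have "degree (\<Prod>b\<in>A-{a}. [:-b, 1:]) \<le> (\<Sum>b\<in>A-{a}. degree [:-b, 1:])"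
      using degree_prod_sum_le[of "A-{a}" "\<lambda>b. [:-b, 1:]"] assms(1) by (simp add: o_def)
    also have "\<dots> = card A - 1"
      using \<open>a \<in> A\<close> assms(1) by simp
    finally show "degree (\<Prod>b\<in>A-{a}. [:-b, 1:]) \<le> card A - 1" .
  qed (fact assms(1))
  have agree: "poly p y = poly q y" if "y \<in> A" for y
  proof -
    have "poly q y = (\<Sum>a\<in>A. if a = y then poly p a else 0)"
      unfolding poly_q
    proof (intro sum.cong refl)
      fix a assume "a \<in> A"
      show "poly p a * (\<Prod>b\<in>A-{a}. (y - b) / (a - b)) = (if a = y then poly p a else 0)"
      proof (cases "a = y")
        case True
        have "(y - b) / (a - b) = 1" if "b \<in> A-{a}" for b
        proof -
          have "a - b \<noteq> 0" using that by auto
          then show ?thesis using True by simp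
        qed
        then have "(\<Prod>b\<in>A-{a}. (y - b) / (a - b)) = 1"
          by (rule prod.neutral[rule_format])
        then show ?thesis using True by simp
      next
        case False
        then have "(\<Prod>b\<in>A-{a}. (y - b) / (a - b)) = 0"
          using that assms(1) by (intro prod_zero) auto
        then show ?thesis using False by simp
      qed
    qed
    then show ?thesis using that assms(1) by simp
  qed
  have "p = q"
    by (rule poly_eqI_degree[of A, OF agree]) (use assms deg_q in linarith)+
  then show ?thesis unfolding poly_q[symmetric] by simp
qed

definition lagrange_coeff :: "nat \<Rightarrow> nat \<Rightarrow> nat \<Rightarrow> real" where
  "lagrange_coeff k x r = (\<Prod>m\<in>{0..k}-{r}. (real x - real m) / (real r - real m))"

lemma poly_eq_sum_lagrange_coeff:
  fixes p :: "real poly"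
  assumes "degree p \<le> k"
  shows "poly p (real x) = (\<Sum>r=0..k. lagrange_coeff k x r * poly p (real r))"
proof -
  have inj: "inj_on real B" for B :: "nat set" by (simp add: inj_on_def)
  have "poly p (real x) = (\<Sum>a\<in>real ` {0..k}. poly p a * (\<Prod>b\<in>real ` {0..k}-{a}. (real x - b) / (a - b)))"
    using assms by (intro lagrange_interpolation) (simp_all add: card_image[OF inj])
  also have "\<dots> = (\<Sum>r=0..k. lagrange_coeff k x r * poly p (real r))"
  proof (subst sum.reindex[OF inj], intro sum.cong refl)
    fix r assume "r \<in> {0..k}"
    have "real ` {0..k} - {real r} = real ` ({0..k}-{r})" by auto
    then show "((\<lambda>a. poly p a * (\<Prod>b\<in>real ` {0..k}-{a}. (real x - b) / (a - b))) \<circ> real) r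
        = lagrange_coeff k x r * poly p (real r)"
      by (simp add: lagrange_coeff_def prod.reindex[OF inj])
  qed
  finally show ?thesis .
qed

lemma prod_real_diff_eq_fact_choose:
  "(\<Prod>i=0..<s. real x - real i) = fact s * real (x choose s)"
  by (simp add: binomial_gbinomial gbinomial_prod_rev)

lemma prod_atLeast0_atMost_real_diff:
  assumes "k \<le> x"
  shows "(\<Prod>m=0..k. real x - real m) = fact k * real (x choose k) * (real x - real k)"
proof -
  have "Suc k * (x choose Suc k) = (x - k) * (x choose k)"
    using binomial_absorption[of k x] binomial_absorb_comp[of x k] by simp
  then have "real (Suc k) * real (x choose Suc k) = (real x - real k) * real (x choose k)"
    using assms by (metis of_nat_diff of_nat_mult)
  then show ?thesis
    using prod_real_diff_eq_fact_choose[where s = "Suc k"] by (simp add: atLeastLessThanSuc_atLeastAtMost)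
qed

lemma prod_delete_node_real_diff:
  assumes "r \<le> k"
  shows "(\<Prod>m\<in>{0..k}-{r}. real r - real m) = (-1) ^ (k - r) * fact r * fact (k - r)"
  using assms
proof (induction k rule: dec_induct)
  case base
  have "{0..r}-{r} = {0..<r}" by auto
  then show ?case using prod_real_diff_eq_fact_choose[where s = r and x = r] by simp
next
  case (step k)
  have "{0..Suc k}-{r} = insert (Suc k) ({0..k}-{r})" using step by auto
  moreover have "Suc k - r = Suc (k - r)" and "real r - real (Suc k) = - real (Suc (k - r))"
    using step by (simp_all add: of_nat_diff)
  ultimately show ?case using step.IH by (simp add: algebra_simps)
qed

lemma lagrange_coeff_eq:
  assumes "r \<le> k" and "k < x"
  shows "lagrange_coeff k x r
       = (-1) ^ (k - r) * real (x choose k) * real (k choose r) * ((real x - real k) / (real x - real r))"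
proof -
  have xr: "real x - real r \<noteq> 0" using assms by simp
  have "(\<Prod>m=0..k. real x - real m) = (real x - real r) * (\<Prod>m\<in>{0..k}-{r}. real x - real m)"
    using assms by (subst prod.remove[of _ r]) auto
  then have num: "(\<Prod>m\<in>{0..k}-{r}. real x - real m) = fact k * real (x choose k) * (real x - real k) / (real x - real r)"
    using prod_atLeast0_atMost_real_diff[of k x] assms xr by (simp add: field_simps)
  have choose_eq: "real (k choose r) = fact k / (fact r * fact (k - r))"
    using assms by (simp add: binomial_fact)
  have "((-1::real) ^ (k - r)) * (-1) ^ (k - r) = 1"
    by (simp add: power_mult_distrib[symmetric])
  then show ?thesis
    unfolding lagrange_coeff_def prod_dividef num prod_delete_node_real_diff[OF assms(1)] choose_eq
    using xr by (simp add: field_simps)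
qed

definition gchoose_poly :: "nat \<Rightarrow> 'a::field_char_0 poly" where
  "gchoose_poly s = smult (inverse (fact s)) (\<Prod>i=0..<s. [:- of_nat i, 1:])"

lemma poly_gchoose_poly: "poly (gchoose_poly s) x = x gchoose s"
  by (simp add: gchoose_poly_def poly_prod gbinomial_prod_rev field_simps)

lemma degree_gchoose_poly: "degree (gchoose_poly s) \<le> s"
proof -
  have "degree (\<Prod>i=0..<s. [:- of_nat i, 1:] :: 'a poly) \<le> (\<Sum>i=0..<s. degree ([:- of_nat i, 1:] :: 'a poly))"
    using degree_prod_sum_le[of "{0..<s}" "\<lambda>i. [:- of_nat i, 1:] :: 'a poly"] by (simp add: o_def)
  then show ?thesis
    unfolding gchoose_poly_def by (simp add: degree_smult_le order.trans)
qed

text \<open>The number of \<open>k\<close>-subsets of an \<open>n\<close>-set meeting a fixed \<open>r\<close>-subset in exactly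
  \<open>s\<close> elements.\<close>

definition intersection_count :: "nat \<Rightarrow> nat \<Rightarrow> nat \<Rightarrow> nat \<Rightarrow> real" where
  "intersection_count n k s r = real (r choose s) * real ((n - r) choose (k - s))"

lemma intersection_count_polynomial:
  assumes "s \<le> k"
  obtains P :: "real poly"
  where "degree P \<le> k" and "\<And>r. r \<le> n \<Longrightarrow> poly P (real r) = intersection_count n k s r"
proof
  define P :: "real poly" where "P = gchoose_poly s * pcompose (gchoose_poly (k - s)) [:real n, -1:]"
  have "degree P \<le> s + (k - s) * 1"
    unfolding P_def
    by (intro order.trans[OF degree_mult_le] add_mono degree_gchoose_poly
        order.trans[OF degree_pcompose_le] mult_mono) simp_all
  then show "degree P \<le> k" using assms by simp
  fix r assume "r \<le> n"
  then show "poly P (real r) = intersection_count n k s r"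
    by (simp add: P_def poly_gchoose_poly poly_pcompose intersection_count_def binomial_gbinomial of_nat_diff)
qed

lemma intersection_count_lagrange:
  assumes "s \<le> k" and "k < x" and "x \<le> n"
  shows "intersection_count n k s x = (\<Sum>r=0..k. lagrange_coeff k x r * intersection_count n k s r)"
proof -
  obtain P :: "real poly" where deg: "degree P \<le> k"
    and P: "\<And>r. r \<le> n \<Longrightarrow> poly P (real r) = intersection_count n k s r"
    using intersection_count_polynomial[OF assms(1)] by blast
  have "intersection_count n k s x = poly P (real x)"
    using P assms by simp
  also have "\<dots> = (\<Sum>r=0..k. lagrange_coeff k x r * poly P (real r))"
    by (rule poly_eq_sum_lagrange_coeff[OF deg])
  also have "\<dots> = (\<Sum>r=0..k. lagrange_coeff k x r * intersection_count n k s r)"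
    using P assms by (intro sum.cong refl) simp
  finally show ?thesis .
qed

lemma intersection_count_solution:
  fixes t :: "nat \<Rightarrow> real"
  assumes "s \<le> k" and "k \<le> n"
  defines "d \<equiv> \<lambda>r. if r \<le> k then - (\<Sum>x=k+1..n. lagrange_coeff k x r * t x) else t r"
  shows "(\<Sum>r=0..n. d r * intersection_count n k s r) = 0"
proof -
  let ?Q = "intersection_count n k s"
  have "{0..n} = {0..k} \<union> {k+1..n}" using assms by auto
  then have "(\<Sum>r=0..n. d r * ?Q r) = (\<Sum>r=0..k. d r * ?Q r) + (\<Sum>x=k+1..n. t x * ?Q x)"
    by (simp add: sum.union_disjoint d_def)
  also have "(\<Sum>r=0..k. d r * ?Q r) = - (\<Sum>x=k+1..n. t x * (\<Sum>r=0..k. lagrange_coeff k x r * ?Q r))"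
    by (simp add: d_def sum_distrib_left sum_distrib_right sum_negf algebra_simps sum.swap[where A = "{0..k}"])
  also have "\<dots> = - (\<Sum>x=k+1..n. t x * ?Q x)"
    using assms(1) by (simp add: intersection_count_lagrange)
  finally show ?thesis by simp
qed

lemma intersection_count_triangular:
  fixes d :: "nat \<Rightarrow> real"
  assumes "k \<le> n" and "\<And>r. k < r \<Longrightarrow> r \<le> n \<Longrightarrow> d r = 0"
    and "\<And>s. s \<le> k \<Longrightarrow> (\<Sum>r=0..n. d r * intersection_count n k s r) = 0"
    and "r \<le> k"
  shows "d r = 0"
proof -
  \<comment> \<open>Descending induction: once d vanishes on s+1..k, equation s involves only d s.\<close>
  have "\<forall>r. s \<le> r \<and> r \<le> k \<longrightarrow> d r = 0" if "s \<le> k + 1" for s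
    using that
  proof (induction s rule: inc_induct)
    case (step s)
    have "(\<Sum>r\<in>{0..n}-{s}. d r * intersection_count n k s r) = 0"
    proof (intro sum.neutral ballI)
      fix r assume r: "r \<in> {0..n}-{s}"
      show "d r * intersection_count n k s r = 0"
      proof (cases "r < s")
        case True then show ?thesis by (simp add: intersection_count_def binomial_eq_0)
      next
        case False
        then show ?thesis using step.IH assms(2) r by (cases "r \<le> k") auto
      qed
    qed
    moreover have "(\<Sum>r=0..n. d r * intersection_count n k s r)
        = d s * intersection_count n k s s + (\<Sum>r\<in>{0..n}-{s}. d r * intersection_count n k s r)"
      using step assms(1) by (subst sum.remove[of _ s]) auto
    moreover have "intersection_count n k s s \<noteq> 0"
      using step assms(1) by (simp add: intersection_count_def)
    ultimately have "d s = 0" using assms(3)[of s] step by simp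
    then show ?case using step.IH by (metis Suc_leI le_neq_implies_less)
  qed simp
  then show ?thesis using assms(4) by blast
qed

lemma intersection_count_kernel_iff:
  fixes d :: "nat \<Rightarrow> real"
  assumes "k \<le> n"
  shows "(\<forall>s\<le>k. (\<Sum>r=0..n. d r * intersection_count n k s r) = 0)
     \<longleftrightarrow> (\<forall>r\<le>k. d r = - (\<Sum>x=k+1..n. lagrange_coeff k x r * d x))"
proof -
  define d' where "d' r = (if r \<le> k then - (\<Sum>x=k+1..n. lagrange_coeff k x r * d x) else d r)" for r
  have d'_solution: "(\<Sum>r=0..n. d' r * intersection_count n k s r) = 0" if "s \<le> k" for s
    unfolding d'_def using intersection_count_solution[OF that assms] .
  show ?thesis
  proof
    assume kernel: "\<forall>s\<le>k. (\<Sum>r=0..n. d r * intersection_count n k s r) = 0"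
    have "d r - d' r = 0" if "r \<le> k" for r
    proof (rule intersection_count_triangular[OF assms _ _ that])
      fix s assume "s \<le> k"
      then show "(\<Sum>r=0..n. (d r - d' r) * intersection_count n k s r) = 0"
        using kernel d'_solution by (simp add: left_diff_distrib sum_subtractf)
    qed (simp add: d'_def)
    then show "\<forall>r\<le>k. d r = - (\<Sum>x=k+1..n. lagrange_coeff k x r * d x)"
      by (simp add: d'_def eq_neg_iff_add_eq_0)
  next
    assume "\<forall>r\<le>k. d r = - (\<Sum>x=k+1..n. lagrange_coeff k x r * d x)"
    then have "d = d'" by (auto simp: d'_def)
    then show "\<forall>s\<le>k. (\<Sum>r=0..n. d r * intersection_count n k s r) = 0"
      using d'_solution by simp
  qed
qed

lemma choose_mult_commute:
  assumes "a \<le> N" and "b \<le> N"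
  shows "(N choose a) * ((N - a) choose b) = (N choose b) * ((N - b) choose a)"
proof (cases "a + b \<le> N")
  case True
  then show ?thesis
    using choose_mult[of a "a + b" N] choose_mult[of b "a + b" N] binomial_symmetric[of a "a + b"]
    by simp
next
  case False
  then have "N - a < b" and "N - b < a" using assms by auto
  then show ?thesis by (simp add: binomial_eq_0)
qed

lemma choose_mult_intersection:
  assumes "s \<le> k" "k \<le> n" "s \<le> i" "i \<le> n"
  shows "(n choose k) * (k choose s) * ((n - k) choose (i - s))
       = (n choose i) * (i choose s) * ((n - i) choose (k - s))"
proof -
  have "(n choose k) * (k choose s) * ((n - k) choose (i - s))
      = (n choose s) * (((n - s) choose (k - s)) * ((n - s - (k - s)) choose (i - s)))"
    using choose_mult[of s k n] assms by (simp add: diff_diff_eq)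
  also have "\<dots> = (n choose s) * (((n - s) choose (i - s)) * ((n - s - (i - s)) choose (k - s)))"
    using choose_mult_commute[of "k - s" "n - s" "i - s"] assms by simp
  also have "\<dots> = (n choose i) * (i choose s) * ((n - i) choose (k - s))"
    using choose_mult[of s i n] assms by (simp add: diff_diff_eq)
  finally show ?thesis .
qed

lemma binom_int_weight_eq:
  assumes "s \<le> k" "k \<le> n" "i \<le> n"
  shows "real (k choose s) * real (binom_int (n - k) (int i - int s)) / real (n choose i)
       = intersection_count n k s i / real (n choose k)"
proof (cases "s \<le> i")
  case True
  then have "binom_int (n - k) (int i - int s) = (n - k) choose (i - s)"
    by (simp add: binom_int_def nat_diff_distrib)
  moreover have "real (n choose k) * real (k choose s) * real ((n - k) choose (i - s))
      = real (n choose i) * real (i choose s) * real ((n - i) choose (k - s))"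
    using choose_mult_intersection[OF assms(1,2) True assms(3)] by (metis of_nat_mult)
  moreover have "real (n choose k) \<noteq> 0" "real (n choose i) \<noteq> 0" using assms by auto
  ultimately show ?thesis by (simp add: intersection_count_def field_simps)
next
  case False
  then show ?thesis by (simp add: binom_int_def intersection_count_def binomial_eq_0)
qed

lemma weighted_equation_iff:
  fixes a lam :: "nat \<Rightarrow> real"
  assumes "s \<le> k" "k \<le> n"
  shows "(\<Sum>i=0..n. a i * (real (k choose s) * real (binom_int (n - k) (int i - int s)) / real (n choose i)))
           = (\<Sum>i=0..n. lam i * (real (k choose s) * real (binom_int (n - k) (int i - int s)) / real (n choose i)))
     \<longleftrightarrow> (\<Sum>i=0..n. (a i - lam i) * intersection_count n k s i) = 0"
proof -
  have rescale: "(\<Sum>i=0..n. f i * (real (k choose s) * real (binom_int (n - k) (int i - int s)) / real (n choose i)))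
      = (\<Sum>i=0..n. f i * intersection_count n k s i) / real (n choose k)" for f :: "nat \<Rightarrow> real"
    using assms by (simp add: binom_int_weight_eq sum_divide_distrib)
  have "real (n choose k) \<noteq> 0" using assms by simp
  then show ?thesis
    unfolding rescale by (simp add: left_diff_distrib sum_subtractf divide_simps)
qed

lemma weighted_system_iff:
  fixes a lam :: "nat \<Rightarrow> real"
  assumes "k \<le> n"
  shows "(\<forall>s\<le>k. (\<Sum>i=0..n. a i * (real (k choose s) * real (binom_int (n - k) (int i - int s)) / real (n choose i)))
           = (\<Sum>i=0..n. lam i * (real (k choose s) * real (binom_int (n - k) (int i - int s)) / real (n choose i))))
     \<longleftrightarrow> (\<forall>r\<le>k. a r - lam r = - (\<Sum>x=k+1..n. lagrange_coeff k x r * (a x - lam x)))"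
    (is "?system \<longleftrightarrow> _")
proof -
  have "?system \<longleftrightarrow> (\<forall>s\<le>k. (\<Sum>i=0..n. (a i - lam i) * intersection_count n k s i) = 0)"
    using weighted_equation_iff[OF _ assms] by blast
  also have "\<dots> \<longleftrightarrow> (\<forall>r\<le>k. a r - lam r = - (\<Sum>x=k+1..n. lagrange_coeff k x r * (a x - lam x)))"
    by (rule intersection_count_kernel_iff[OF assms])
  finally show ?thesis .
qed

lemma lagrange_coeff_sum_eq:
  fixes t :: "nat \<Rightarrow> real"
  assumes "r \<le> k"
  shows "(\<Sum>i=k+1..n. (-1) ^ (k - r + 1) * real (i choose k) * real (k choose r)
          * ((real i - real k) / (real i - real r)) * t i) = - (\<Sum>i=k+1..n. lagrange_coeff k i r * t i)"
  using assms by (simp add: lagrange_coeff_eq sum_negf[symmetric])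

theorem mainTheorem16:
  fixes n k :: nat and lam :: "nat \<Rightarrow> real"
  assumes "1 \<le> k" and "k \<le> n"
  shows "\<forall>a :: nat \<Rightarrow> real.
    (\<forall>s\<le>k. (\<Sum>i=0..n. a i * (real (k choose s) * real (binom_int (n - k) (int i - int s)) / real (n choose i)))
           = (\<Sum>i=0..n. lam i * (real (k choose s) * real (binom_int (n - k) (int i - int s)) / real (n choose i))))
    \<longleftrightarrow>
    (\<exists>t :: nat \<Rightarrow> real.
       (\<forall>r\<le>k. a r = (\<Sum>i=k+1..n. (-1) ^ (k - r + 1) * real (i choose k) * real (k choose r)
                          * ((real i - real k) / (real i - real r)) * t i) + lam r)
     \<and> (\<forall>r. k + 1 \<le> r \<and> r \<le> n \<longrightarrow> a r = t r + lam r))"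
  unfolding weighted_system_iff[OF assms(2)]
proof (rule allI, rule iffI)
  fix a :: "nat \<Rightarrow> real"
  assume "\<forall>r\<le>k. a r - lam r = - (\<Sum>x=k+1..n. lagrange_coeff k x r * (a x - lam x))"
  then show "\<exists>t. (\<forall>r\<le>k. a r = (\<Sum>i=k+1..n. (-1) ^ (k - r + 1) * real (i choose k) * real (k choose r)
                        * ((real i - real k) / (real i - real r)) * t i) + lam r)
        \<and> (\<forall>r. k + 1 \<le> r \<and> r \<le> n \<longrightarrow> a r = t r + lam r)"
    by (intro exI[of _ "\<lambda>i. a i - lam i"])
      (simp only: lagrange_coeff_sum_eq cong: imp_cong, auto simp: algebra_simps)
next
  fix a :: "nat \<Rightarrow> real"
  assume "\<exists>t. (\<forall>r\<le>k. a r = (\<Sum>i=k+1..n. (-1) ^ (k - r + 1) * real (i choose k) * real (k choose r)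
                        * ((real i - real k) / (real i - real r)) * t i) + lam r)
        \<and> (\<forall>r. k + 1 \<le> r \<and> r \<le> n \<longrightarrow> a r = t r + lam r)"
  then have "\<exists>t. (\<forall>r\<le>k. a r - lam r = - (\<Sum>x=k+1..n. lagrange_coeff k x r * t x))
      \<and> (\<forall>x. k + 1 \<le> x \<and> x \<le> n \<longrightarrow> t x = a x - lam x)"
    by (simp only: lagrange_coeff_sum_eq cong: imp_cong) (auto simp: algebra_simps)
  then obtain t where low: "\<forall>r\<le>k. a r - lam r = - (\<Sum>x=k+1..n. lagrange_coeff k x r * t x)"
    and high: "\<forall>x. k + 1 \<le> x \<and> x \<le> n \<longrightarrow> t x = a x - lam x"
    by blast
  show "\<forall>r\<le>k. a r - lam r = - (\<Sum>x=k+1..n. lagrange_coeff k x r * (a x - lam x))"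
    using low high by simp
qed

end
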